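(* Let $X\subseteq\mathbb{R}^m$, $f=(f_1,\dots,f_d):X\to\mathbb{R}^d$ with $a_{i0}\le f_i(x)\le a_{in}$ for all $x\in X$, $i\in[d]$, and $\phi:\mathbb{R}^d\to\mathbb{R}$. Let $u:X\to\mathbb{R}^{d\times(n+1)}$ be a vector of convex functions such that for every $x\in X$ and $i\in[d]$: $u_{i0}(x)=a_{i0}$, $u_{in}(x)=f_i(x)$, and $u_{ij}(x)\le\min\{f_i(x),a_{ij}\}$ for $j\in[n-1]$. Let $W$ be a convex set containing $\{(x,s_{\cdot n})\mid s_{\cdot n}=f(x),\ x\in X\}$. Then $$\{(x,\mu)\mid \mu\le\phi(f(x)),\ x\in X\}\subseteq \operatorname{proj}_{(x,\mu)}\Bigl\{(x,\mu,s,\delta)\ \Bigm|\ \mu\le\operatorname{conc}_Q(\bar\phi)(s),\ (Z(s),\delta)\text{ satisfies (Inc-1)},\ u(x)\le s,\ (x,s_{\cdot n})\in W\Bigr\},$$ i.e. the right-hand set is an MICP relaxation of the hypograph of $\phi\circ f$.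
   Context: Let $d,n$ be positive integers, $[k]=\{1,\dots,k\}$. Let $a\in\mathbb{R}^{d\times(n+1)}$ with $a_{i0}<\dots<a_{in}$ for each $i$. For each $i$ let $0=\tau(i,0)<\tau(i,1)<\dots<\tau(i,l_i)=n$ be integers ($l_i\ge1$). Let $\Delta_i=\{z_i\in\mathbb{R}^{n+1}\mid1=z_{i0}\ge z_{i1}\ge\dots\ge z_{in}\ge0\}$. The system (Inc-1) in $(z,\delta)$, $\delta=(\delta_{it})_{i\in[d],t\in[l_i-1]}$: $z_i\in\Delta_i$, $\delta_{it}\in\{0,1\}$, $z_{i\tau(i,t)}\ge\delta_{it}\ge z_{i\tau(i,t)+1}$. For $s\in\mathbb{R}^{d\times(n+1)}$, $s_{\cdot n}=(s_{1n},\dots,s_{dn})$, and $Z(s)=(Z_1(s_1),\dots,Z_d(s_d))$ where $Z_i(s_i)=z_i$ with $z_{i0}=1$ and $z_{ij}=(s_{ij}-s_{i,j-1})/(a_{ij}-a_{i,j-1})$ for $j\in[n]$. Let $v_{ij}\in\mathbb{R}^{n+1}$ have $k$-th component $a_{i,\min\{k,j\}}$ ($k=0,\dots,n$), i.e. $v_{ij}=(a_{i0},\dots,a_{i,j-1},a_{ij},\dots,a_{ij})$; $Q_i=\operatorname{conv}\{v_{i0},\dots,v_{in}\}$, $Q=Q_1\times\dots\times Q_d$, and $\bar\phi:Q\to\mathbb{R}$, $\bar\phi(s)=\phi(s_{1n},\dots,s_{dn})$. $\operatorname{conc}_Q(\bar\phi)$ is the concave envelope of $\bar\phi$ over $Q$.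 *)

theory Defs
  imports "HOL-Analysis.Analysis"
begin

text \<open>Row i of a point of R^(d x (n+1)) is represented as a function nat => real,
  using indices j = 0..n; points of R^(d x (n+1)) are functions 'd => nat => real
  whose components with j > n are zero.\<close>

definition vpt :: "('d \<Rightarrow> nat \<Rightarrow> real) \<Rightarrow> nat \<Rightarrow> 'd \<Rightarrow> nat \<Rightarrow> nat \<Rightarrow> real" where
  "vpt a n i j = (\<lambda>k. if k \<le> n then a i (min k j) else 0)"

definition Qi :: "('d \<Rightarrow> nat \<Rightarrow> real) \<Rightarrow> nat \<Rightarrow> 'd \<Rightarrow> (nat \<Rightarrow> real) set" where
  "Qi a n i = {z. \<exists>lam::nat \<Rightarrow> real. (\<forall>j\<le>n. 0 \<le> lam j) \<and> (\<Sum>j\<le>n. lam j) = 1 \<and>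
      z = (\<lambda>k. \<Sum>j\<le>n. lam j * vpt a n i j k)}"

definition Qset :: "('d \<Rightarrow> nat \<Rightarrow> real) \<Rightarrow> nat \<Rightarrow> ('d \<Rightarrow> nat \<Rightarrow> real) set" where
  "Qset a n = {s. \<forall>i. s i \<in> Qi a n i}"

definition concave_on_mat :: "('d \<Rightarrow> nat \<Rightarrow> real) set \<Rightarrow> (('d \<Rightarrow> nat \<Rightarrow> real) \<Rightarrow> real) \<Rightarrow> bool" where
  "concave_on_mat S h \<longleftrightarrow> (\<forall>x\<in>S. \<forall>y\<in>S. \<forall>t::real. 0 \<le> t \<and> t \<le> 1 \<longrightarrow>
      (\<lambda>i j. (1 - t) * x i j + t * y i j) \<in> S \<and>
      (1 - t) * h x + t * h y \<le> h (\<lambda>i j. (1 - t) * x i j + t * y i j))"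

text \<open>Concave envelope over S: pointwise infimum of all concave overestimators on S
  (extended-real valued; +infinity if there is none).\<close>
definition conc :: "('d \<Rightarrow> nat \<Rightarrow> real) set \<Rightarrow> (('d \<Rightarrow> nat \<Rightarrow> real) \<Rightarrow> real)
    \<Rightarrow> ('d \<Rightarrow> nat \<Rightarrow> real) \<Rightarrow> ereal" where
  "conc S g s = (INF h\<in>{h. concave_on_mat S h \<and> (\<forall>t\<in>S. g t \<le> h t)}. ereal (h s))"

definition phibar :: "(real^'d \<Rightarrow> real) \<Rightarrow> nat \<Rightarrow> ('d::finite \<Rightarrow> nat \<Rightarrow> real) \<Rightarrow> real" where
  "phibar phi n s = phi (\<chi> i. s i n)"

definition Zmap :: "('d \<Rightarrow> nat \<Rightarrow> real) \<Rightarrow> ('d \<Rightarrow> nat \<Rightarrow> real) \<Rightarrow> 'd \<Rightarrow> nat \<Rightarrow> real" where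
  "Zmap a s i j = (if j = 0 then 1 else (s i j - s i (j - 1)) / (a i j - a i (j - 1)))"

definition Delta :: "nat \<Rightarrow> (nat \<Rightarrow> real) set" where
  "Delta n = {z. z 0 = 1 \<and> (\<forall>j<n. z j \<ge> z (Suc j)) \<and> z n \<ge> 0}"

definition Inc1 :: "nat \<Rightarrow> ('d \<Rightarrow> nat \<Rightarrow> nat) \<Rightarrow> ('d \<Rightarrow> nat) \<Rightarrow> ('d \<Rightarrow> nat \<Rightarrow> real)
    \<Rightarrow> ('d \<Rightarrow> nat \<Rightarrow> real) \<Rightarrow> bool" where
  "Inc1 n tau l z delta \<longleftrightarrow> (\<forall>i. z i \<in> Delta n) \<and>
     (\<forall>i. \<forall>t\<in>{1..l i - 1}. delta i t \<in> {0, 1} \<and>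
        z i (tau i t) \<ge> delta i t \<and> delta i t \<ge> z i (tau i t + 1))"

end

theory Submission
  imports Defs
begin

text \<open>Fix x \<in> X and take the incremental point s_ij = min(a_ij, f_i(x)). If
  a_i,j-1 \<le> f_i(x) \<le> a_ij, the row s_i is a convex combination of the consecutive vertices
  v_i,j-1 and v_ij, so s \<in> Q and conc_Q(phibar)(s) \<ge> phibar(s) = \<phi>(f(x)), because s_.n = f(x).
  Z(s) is a staircase (1, ..., 1, \<theta>, 0, ..., 0): its j-th entry is the fraction of the segment
  [a_i,j-1, a_ij] lying below f_i(x). Such a point satisfies (Inc-1) with
  \<delta>_it = [Z_i,tau(i,t)+1(s) > 0]. Finally u(x) \<le> s is exactly the hypothesis on u, and
  (x, s_.n) = (x, f(x)) \<in> W.\<close>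

definition incr_point :: "('d \<Rightarrow> nat \<Rightarrow> real) \<Rightarrow> nat \<Rightarrow> real^'d \<Rightarrow> 'd \<Rightarrow> nat \<Rightarrow> real" where
  "incr_point a n y = (\<lambda>i k. if k \<le> n then min (a i k) (y $ i) else 0)"

definition staircase :: "nat \<Rightarrow> (nat \<Rightarrow> real) \<Rightarrow> bool" where
  "staircase n z \<longleftrightarrow> z 0 = 1 \<and> (\<forall>k\<le>n. 0 \<le> z k \<and> z k \<le> 1) \<and> (\<forall>k<n. 0 < z (Suc k) \<longrightarrow> z k = 1)"

lemma le_conc:
  assumes "s \<in> S"
  shows "ereal (g s) \<le> conc S g s"
  unfolding conc_def using assms by (auto intro: INF_greatest)

lemma exists_bracketing_index:
  fixes a :: "nat \<Rightarrow> real"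
  assumes "1 \<le> n" "a 0 \<le> F" "F \<le> a n"
  shows "\<exists>j\<in>{1..n}. a (j - 1) \<le> F \<and> F \<le> a j"
  using assms
proof (induction n)
  case (Suc m)
  show ?case
  proof (cases "1 \<le> m \<and> F \<le> a m")
    case True
    then show ?thesis using Suc.IH Suc.prems(2) by fastforce
  next
    case False
    then have "a m \<le> F" using Suc.prems(2) by (cases "m = 0") auto
    then show ?thesis using Suc.prems(3) by (intro bexI[of _ "Suc m"]) auto
  qed
qed simp

lemma incr_point_last:
  assumes "\<forall>i. y $ i \<le> a i n"
  shows "(\<chi> i. incr_point a n y i n) = y"
  using assms by (simp add: incr_point_def vec_eq_iff)

lemma incr_point_in_Qi:
  assumes n: "1 \<le> n" and a_incr: "\<forall>j<n. a i j < a i (Suc j)"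
    and y: "a i 0 \<le> y $ i" "y $ i \<le> a i n"
  shows "incr_point a n y i \<in> Qi a n i"
proof -
  obtain j where j: "1 \<le> j" "j \<le> n" and bracket: "a i (j - 1) \<le> y $ i" "y $ i \<le> a i j"
    using exists_bracketing_index[of n "a i" "y $ i"] n y by auto
  have a_mono: "a i p \<le> a i q" if "p \<le> q" "q \<le> n" for p q
    using lift_Suc_mono_le_ivl[of "{..<n}" "a i" p q] a_incr that by fastforce
  have gap: "a i (j - 1) < a i j"
    using a_incr[rule_format, of "j - 1"] j by simp
  define \<alpha> where "\<alpha> = (a i j - y $ i) / (a i j - a i (j - 1))"
  define \<beta> where "\<beta> = (y $ i - a i (j - 1)) / (a i j - a i (j - 1))"
  define lam where "lam = (\<lambda>m. (if m = j - 1 then \<alpha> else 0) + (if m = j then \<beta> else 0))"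
  have "\<alpha> \<ge> 0" "\<beta> \<ge> 0" using bracket gap by (auto simp: \<alpha>_def \<beta>_def)
  then have lam_nonneg: "\<forall>m\<le>n. 0 \<le> lam m" by (simp add: lam_def)
  have weights: "\<alpha> + \<beta> = 1" using gap by (simp add: \<alpha>_def \<beta>_def divide_simps)
  have affine: "\<alpha> * a i (j - 1) + \<beta> * a i j = y $ i"
    using gap by (simp add: \<alpha>_def \<beta>_def divide_simps) (simp add: algebra_simps)
  have lam_sum: "(\<Sum>m\<le>n. lam m) = 1" using j weights by (simp add: lam_def sum.distrib)
  have "incr_point a n y i k = (\<Sum>m\<le>n. lam m * vpt a n i m k)" for k
  proof -
    have "(\<Sum>m\<le>n. lam m * vpt a n i m k) = (\<Sum>m\<le>n. (if m = j - 1 then \<alpha> * vpt a n i m k else 0)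
        + (if m = j then \<beta> * vpt a n i m k else 0))"
      by (rule sum.cong) (auto simp: lam_def distrib_right)
    also have "\<dots> = \<alpha> * vpt a n i (j - 1) k + \<beta> * vpt a n i j k"
      using j by (simp add: sum.distrib)
    also have "\<dots> = incr_point a n y i k"
    proof (cases "k \<le> n")
      case True
      show ?thesis
      proof (cases "k < j")
        case True
        then have "a i k \<le> a i (j - 1)" using a_mono j by simp
        then have "min (a i k) (y $ i) = a i k" using bracket by simp
        then show ?thesis using True \<open>k \<le> n\<close> weights
          by (simp add: vpt_def incr_point_def min_absorb1 distrib_right[symmetric])
      next
        case False
        then have "min (a i k) (y $ i) = y $ i" using a_mono[of j k] \<open>k \<le> n\<close> bracket by simp
        then show ?thesis using False \<open>k \<le> n\<close> affine
          by (simp add: vpt_def incr_point_def min_absorb2)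
      qed
    qed (simp add: vpt_def incr_point_def)
    finally show ?thesis by simp
  qed
  then show ?thesis unfolding Qi_def using lam_nonneg lam_sum by blast
qed

lemma incr_point_in_Qset:
  assumes "1 \<le> n" and "\<forall>i. \<forall>j<n. a i j < a i (Suc j)"
    and "\<forall>i. a i 0 \<le> y $ i \<and> y $ i \<le> a i n"
  shows "incr_point a n y \<in> Qset a n"
  unfolding Qset_def using assms by (blast intro: incr_point_in_Qi)

lemma le_incr_point:
  assumes "\<forall>i. w i 0 = a i 0" and "\<forall>i. w i n = y $ i"
    and "\<forall>i. \<forall>j\<in>{1..n - 1}. w i j \<le> min (y $ i) (a i j)"
    and "\<forall>i. a i 0 \<le> y $ i \<and> y $ i \<le> a i n"
  shows "\<forall>i. \<forall>j\<le>n. w i j \<le> incr_point a n y i j"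
proof (intro allI impI)
  fix i j assume "j \<le> n"
  then consider "j = 0" | "j = n" | "j \<in> {1..n - 1}" by fastforce
  then show "w i j \<le> incr_point a n y i j"
    using assms \<open>j \<le> n\<close> by cases (auto simp: incr_point_def)
qed

lemma clipped_increment_ratio_bounds:
  fixes p q F :: real
  assumes "p < q"
  shows "0 \<le> (min q F - min p F) / (q - p)" "(min q F - min p F) / (q - p) \<le> 1"
  using assms by (auto simp: min_def divide_le_eq_1)

lemma clipped_increment_ratio_saturated:
  fixes p q r F :: real
  assumes "p < q" "q < r" "0 < (min r F - min q F) / (r - q)"
  shows "(min q F - min p F) / (q - p) = 1"
proof -
  have "q < F" using assms(2,3) by (auto simp: min_def zero_less_divide_iff split: if_splits)
  then show ?thesis using assms(1) by simp
qed

lemma Zmap_incr_point: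
  assumes "1 \<le> k" "k \<le> n"
  shows "Zmap a (incr_point a n y) i k
    = (min (a i k) (y $ i) - min (a i (k - 1)) (y $ i)) / (a i k - a i (k - 1))"
  using assms by (auto simp: Zmap_def incr_point_def)

lemma staircase_Zmap_incr_point:
  assumes a_incr: "\<forall>j<n. a i j < a i (Suc j)"
  shows "staircase n (Zmap a (incr_point a n y) i)"
proof -
  let ?z = "Zmap a (incr_point a n y) i"
  have gap: "a i (k - 1) < a i k" if "1 \<le> k" "k \<le> n" for k
    using a_incr[rule_format, of "k - 1"] that by simp
  have bounds: "0 \<le> ?z k \<and> ?z k \<le> 1" if "k \<le> n" for k
  proof (cases "k = 0")
    case False
    then have k: "1 \<le> k" "k \<le> n" using that by simp_all
    show ?thesis
      unfolding Zmap_incr_point[OF k] using clipped_increment_ratio_bounds[OF gap[OF k]] by simp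
  qed (simp add: Zmap_def)
  have saturated: "?z k = 1" if "k < n" "0 < ?z (Suc k)" for k
  proof (cases "k = 0")
    case False
    then have k: "1 \<le> k" "k \<le> n" and k': "1 \<le> Suc k" "Suc k \<le> n" using that(1) by simp_all
    show ?thesis
      using that(2) clipped_increment_ratio_saturated[where F = "y $ i", OF gap[OF k] a_incr[rule_format, OF that(1)]]
      unfolding Zmap_incr_point[OF k] Zmap_incr_point[OF k'] by simp
  qed (simp add: Zmap_def)
  show ?thesis
    unfolding staircase_def using bounds saturated by (simp add: Zmap_def)
qed

lemma staircase_in_Delta:
  assumes "staircase n z"
  shows "z \<in> Delta n"
  unfolding Delta_def
proof (intro CollectI conjI allI impI)
  show "z 0 = 1" "0 \<le> z n" using assms by (simp_all add: staircase_def)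
  fix k assume "k < n"
  then have "0 \<le> z k" "z (Suc k) \<le> 1" "0 < z (Suc k) \<Longrightarrow> z k = 1"
    using assms by (simp_all add: staircase_def)
  then show "z (Suc k) \<le> z k" by fastforce
qed

lemma Inc1_staircase:
  assumes z: "\<forall>i. staircase n (z i)" and tau: "\<forall>i. \<forall>t\<in>{1..l i - 1}. tau i t < n"
  shows "Inc1 n tau l z (\<lambda>i t. if 0 < z i (tau i t + 1) then 1 else 0)"
  unfolding Inc1_def
proof (intro conjI allI ballI)
  fix i
  show "z i \<in> Delta n" using z staircase_in_Delta by blast
  fix t assume "t \<in> {1..l i - 1}"
  then have "tau i t < n" using tau by blast
  then have "0 \<le> z i (tau i t)" "0 \<le> z i (tau i t + 1)" "z i (tau i t + 1) \<le> 1"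
    "0 < z i (tau i t + 1) \<Longrightarrow> z i (tau i t) = 1"
    using z unfolding staircase_def by auto
  then show "(if 0 < z i (tau i t + 1) then 1 else 0) \<in> {0, 1}"
    "(if 0 < z i (tau i t + 1) then 1 else 0) \<le> z i (tau i t)"
    "z i (tau i t + 1) \<le> (if 0 < z i (tau i t + 1) then 1 else 0)"
    by auto
qed

lemma Inc1_Zmap_incr_point:
  assumes "\<forall>i. \<forall>j<n. a i j < a i (Suc j)"
    and "\<forall>i. \<forall>t<l i. tau i t < tau i (Suc t)" and "\<forall>i. tau i (l i) = n"
  shows "Inc1 n tau l (Zmap a (incr_point a n y))
    (\<lambda>i t. if 0 < Zmap a (incr_point a n y) i (tau i t + 1) then 1 else 0)"
proof (rule Inc1_staircase)
  show "\<forall>i. staircase n (Zmap a (incr_point a n y) i)"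
    using assms(1) by (blast intro: staircase_Zmap_incr_point)
  have "tau i t < n" if "t < l i" for i t
    using lift_Suc_mono_less_ivl[of "{..<l i}" "tau i" t "l i"] assms(2,3) that by fastforce
  then show "\<forall>i. \<forall>t\<in>{1..l i - 1}. tau i t < n"
    by fastforce
qed

theorem theorem4p1:
  fixes n :: nat
    and a :: "'d::finite \<Rightarrow> nat \<Rightarrow> real"
    and tau :: "'d \<Rightarrow> nat \<Rightarrow> nat" and l :: "'d \<Rightarrow> nat"
    and X :: "(real^'m) set"
    and f :: "real^'m \<Rightarrow> real^'d"
    and phi :: "real^'d \<Rightarrow> real"
    and u :: "'d \<Rightarrow> nat \<Rightarrow> real^'m \<Rightarrow> real"
    and W :: "((real^'m) \<times> (real^'d)) set"
  assumes n_pos: "n \<ge> 1"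
    and a_incr: "\<forall>i. \<forall>j<n. a i j < a i (Suc j)"
    and l_pos: "\<forall>i. l i \<ge> 1"
    and tau_0: "\<forall>i. tau i 0 = 0"
    and tau_l: "\<forall>i. tau i (l i) = n"
    and tau_incr: "\<forall>i. \<forall>t<l i. tau i t < tau i (Suc t)"
    and f_bounds: "\<forall>x\<in>X. \<forall>i. a i 0 \<le> f x $ i \<and> f x $ i \<le> a i n"
    and u_convex: "\<forall>i. \<forall>j\<le>n. convex_on (convex hull X) (u i j)"
    and u_0: "\<forall>x\<in>X. \<forall>i. u i 0 x = a i 0"
    and u_n: "\<forall>x\<in>X. \<forall>i. u i n x = f x $ i"
    and u_mid: "\<forall>x\<in>X. \<forall>i. \<forall>j\<in>{1..n-1}. u i j x \<le> min (f x $ i) (a i j)"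
    and W_convex: "convex W"
    and W_contains: "{(x, f x) | x. x \<in> X} \<subseteq> W"
  shows "{(x, \<mu>). x \<in> X \<and> \<mu> \<le> phi (f x)} \<subseteq>
    (\<lambda>(x, \<mu>, s, \<delta>). (x, \<mu>)) `
      {(x, \<mu>, s, \<delta>). ereal \<mu> \<le> conc (Qset a n) (phibar phi n) s
         \<and> Inc1 n tau l (Zmap a s) \<delta>
         \<and> (\<forall>i. \<forall>j\<le>n. u i j x \<le> s i j)
         \<and> (x, \<chi> i. s i n) \<in> W}"
proof (rule subsetI, clarify)
  fix x \<mu> assume x: "x \<in> X" and \<mu>: "\<mu> \<le> phi (f x)"
  define s where "s = incr_point a n (f x)"
  define \<delta> where "\<delta> = (\<lambda>i t. if 0 < Zmap a s i (tau i t + 1) then 1 else (0::real))"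
  have f_x: "\<forall>i. a i 0 \<le> f x $ i \<and> f x $ i \<le> a i n"
    using f_bounds x by blast
  have s_last: "(\<chi> i. s i n) = f x"
    unfolding s_def using f_x by (intro incr_point_last) blast
  have "ereal \<mu> \<le> ereal (phibar phi n s)"
    using \<mu> s_last by (simp add: phibar_def)
  also have "\<dots> \<le> conc (Qset a n) (phibar phi n) s"
    unfolding s_def using n_pos a_incr f_x by (intro le_conc incr_point_in_Qset)
  finally have "ereal \<mu> \<le> conc (Qset a n) (phibar phi n) s" .
  moreover have "Inc1 n tau l (Zmap a s) \<delta>"
    unfolding \<delta>_def s_def using a_incr tau_incr tau_l by (rule Inc1_Zmap_incr_point)
  moreover have "\<forall>i. \<forall>j\<le>n. u i j x \<le> s i j"
    unfolding s_def using u_0 u_n u_mid x f_x by (intro le_incr_point) auto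
  moreover have "(x, \<chi> i. s i n) \<in> W"
    using W_contains x s_last by blast
  ultimately show "(x, \<mu>) \<in> (\<lambda>(x, \<mu>, s, \<delta>). (x, \<mu>)) `
      {(x, \<mu>, s, \<delta>). ereal \<mu> \<le> conc (Qset a n) (phibar phi n) s
         \<and> Inc1 n tau l (Zmap a s) \<delta>
         \<and> (\<forall>i. \<forall>j\<le>n. u i j x \<le> s i j)
         \<and> (x, \<chi> i. s i n) \<in> W}"
    by (intro rev_image_eqI[of "(x, \<mu>, s, \<delta>)"]) auto
qed

end
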